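(* Suppose the collision kernel satisfies the Assumption stated in the context with $\eta\ge\frac32$. Let $0\le f_0\in L^1(\mathbb R_{\ge0})$ have finite mass and energy, and let $f\in C([0,\infty);L^1(\mathbb R_{\ge0}))$ be the unique conservative mild solution on $[0,\infty)$ with $f(\cdot,0)=f_0$. Suppose in addition $f_0\in L^\infty(\mathbb R_{\ge0})$. Then $f(\cdot,t)\in L^\infty(\mathbb R_{\ge0})$ for all $t\ge0$ and $$\|f(t)\|_{L^\infty}\le(1+\|f_0\|_{L^\infty})\exp\Big(8b_0^2\int_0^t\|f(\tau)\|_{L^1}^2\,d\tau\Big)\qquad\forall\,t\ge0.$$
   Context: Norms: $\|f(t)\|_{L^1}=\int_0^\infty|f(x,t)|\,dx$, $\|f(t)\|_{L^\infty}$ the essential supremum in $x$. Kernel. $\hat\phi:[0,\infty)\to\mathbb R$ continuous bounded, $\Phi(r,\rho)=(\hat\phi(r)+\hat\phi(\rho))^2$, $x_*=(y+z-x)_+$. If $x_*xyz>0$, $W(x,y,z)=\frac{1}{4\pi\sqrt{xyz}}\int_{|\sqrt x-\sqrt y|\vee|\sqrt{x_*}-\sqrt z|}^{(\sqrt x+\sqrt y)\wedge(\sqrt{x_*}+\sqrt z)}ds\int_0^{2\pi}\Phi(\sqrt2 s,\sqrt2 Y_* )d\theta$ with $Y_*=\big|\sqrt{(z-\frac{(x-y+s^2)^2}{4s^2})_+}+e^{i\theta}\sqrt{(x-\frac{(x-y+s^2)^2}{4s^2})_+}\big|$ ($s>0$), $Y_*=0$ ($s=0$). Otherwise $W(0,y,z)=\Phi(\sqrt{2y},\sqrt{2z})/\sqrt{yz}$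 ($y,z>0$), $W(x,0,z)=\Phi(\sqrt{2x},\sqrt{2(z-x)})/\sqrt{xz}$ ($z>x>0$), $W(x,y,0)=\Phi(\sqrt{2(y-x)},\sqrt{2x})/\sqrt{xy}$ ($y>x>0$), $W=0$ otherwise. Mild solutions. With $f=f(x)$, $f_*=f(x_* )$, $f'=f(y)$, $f_*'=f(z)$, $Q(f)(x)=\int_{\mathbb R_{\ge0}^2}W(x,y,z)[f'f_*'(1+f+f_* )-ff_*(1+f'+f_*')]\sqrt y\sqrt z\,dy\,dz$. A nonnegative measurable $f$ on $\mathbb R_{\ge0}\times[0,\infty)$ is a mild solution on $[0,\infty)$ if (i) $\sup_{t\in[0,T]}\int(1+x)f(x,t)\sqrt x\,dx<\infty$ for all $T>0$; (ii) there is a null set $Z$ independent of $t$ such that for $x\notin Z$, $t\ge0$: $\int_0^td\tau\int W[f'f_*'(1+f+f_* )+ff_*(1+f'+f_*')]\sqrt y\sqrt z\,dy\,dz<\infty$ and $f(x,t)=f(x,0)+\int_0^tQ(f)(x,\tau)d\tau$. Conservative: $\int f\sqrt x\,dx$ and $\int xf\sqrt x\,dx$ constant in $t$. Assumption. $\hat\phi$ continuous on $[0,\infty)$; constants $b_0>0,\eta\ge1$ with $0\le\hat\phi(r)\le b_0\frac{r^\eta}{1+r^\eta}$ for all $r\ge0$; there is $k\in C^1([1,\sqrt2])$, $k(1)=1$, with $\hat\phi(ar)\le k(a)\hat\phi(r)$ for all $r>0$, $1<a\le\sqrt2$. *)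

theory Defs
  imports "HOL-Analysis.Analysis" "HOL-Probability.Essential_Supremum"
begin

text \<open>Functions of (x,t) are modelled as f :: real => real => real, f x t,
  only values with x >= 0, t >= 0 matter.\<close>

definition Phi :: "(real \<Rightarrow> real) \<Rightarrow> real \<Rightarrow> real \<Rightarrow> real" where
  "Phi ph r \<rho> = (ph r + ph \<rho>)^2"

definition xstar :: "real \<Rightarrow> real \<Rightarrow> real \<Rightarrow> real" where
  "xstar x y z = max (y + z - x) 0"

definition Ystar :: "real \<Rightarrow> real \<Rightarrow> real \<Rightarrow> real \<Rightarrow> real \<Rightarrow> real" where
  "Ystar x y z s \<theta> =
     (if s > 0 then
        (let A = (x - y + s^2)^2 / (4 * s^2) in
         cmod (complex_of_real (sqrt (max (z - A) 0))
               + cis \<theta> * complex_of_real (sqrt (max (x - A) 0))))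
      else 0)"

definition W :: "(real \<Rightarrow> real) \<Rightarrow> real \<Rightarrow> real \<Rightarrow> real \<Rightarrow> real" where
  "W ph x y z =
     (if xstar x y z * x * y * z > 0 then
        1 / (4 * pi * sqrt (x * y * z)) *
        (LINT s:{max \<bar>sqrt x - sqrt y\<bar> \<bar>sqrt (xstar x y z) - sqrt z\<bar> ..
                  min (sqrt x + sqrt y) (sqrt (xstar x y z) + sqrt z)}|lborel.
           (LINT \<theta>:{0..2*pi}|lborel. Phi ph (sqrt 2 * s) (sqrt 2 * Ystar x y z s \<theta>)))
      else if x = 0 \<and> y > 0 \<and> z > 0 then
        Phi ph (sqrt (2*y)) (sqrt (2*z)) / sqrt (y * z)
      else if y = 0 \<and> z > x \<and> x > 0 then
        Phi ph (sqrt (2*x)) (sqrt (2*(z - x))) / sqrt (x * z)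
      else if z = 0 \<and> y > x \<and> x > 0 then
        Phi ph (sqrt (2*(y - x))) (sqrt (2*x)) / sqrt (x * y)
      else 0)"

definition gain :: "(real \<Rightarrow> real \<Rightarrow> real) \<Rightarrow> real \<Rightarrow> real \<Rightarrow> real \<Rightarrow> real \<Rightarrow> real" where
  "gain f x y z t = f y t * f z t * (1 + f x t + f (xstar x y z) t)"

definition loss :: "(real \<Rightarrow> real \<Rightarrow> real) \<Rightarrow> real \<Rightarrow> real \<Rightarrow> real \<Rightarrow> real \<Rightarrow> real" where
  "loss f x y z t = f x t * f (xstar x y z) t * (1 + f y t + f z t)"

definition Qcoll :: "(real \<Rightarrow> real) \<Rightarrow> (real \<Rightarrow> real \<Rightarrow> real) \<Rightarrow> real \<Rightarrow> real \<Rightarrow> real" where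
  "Qcoll ph f x t =
     (LINT p:{0..}\<times>{0..}|(lborel \<Otimes>\<^sub>M lborel).
        W ph x (fst p) (snd p) * (gain f x (fst p) (snd p) t - loss f x (fst p) (snd p) t)
          * sqrt (fst p) * sqrt (snd p))"

definition mild_solution :: "(real \<Rightarrow> real) \<Rightarrow> (real \<Rightarrow> real \<Rightarrow> real) \<Rightarrow> bool" where
  "mild_solution ph f \<longleftrightarrow>
     (\<forall>x\<ge>0. \<forall>t\<ge>0. f x t \<ge> 0) \<and>
     (\<lambda>p. f (fst p) (snd p)) \<in> borel_measurable (lborel :: (real \<times> real) measure) \<and>
     (\<forall>T>0. \<exists>C::real. \<forall>t\<in>{0..T}.
        (\<integral>\<^sup>+ x\<in>{0..}. ennreal ((1 + x) * f x t * sqrt x) \<partial>lborel) \<le> ennreal C) \<and>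
     (\<exists>Z. Z \<in> null_sets lborel \<and>
        (\<forall>x\<in>{0..} - Z. \<forall>t\<ge>0.
           (\<integral>\<^sup>+ \<tau>\<in>{0..t}.
              (\<integral>\<^sup>+ p\<in>{0..}\<times>{0..}.
                 ennreal (W ph x (fst p) (snd p) *
                          (gain f x (fst p) (snd p) \<tau> + loss f x (fst p) (snd p) \<tau>)
                          * sqrt (fst p) * sqrt (snd p)) \<partial>(lborel \<Otimes>\<^sub>M lborel)) \<partial>lborel) < \<infinity>
           \<and> f x t = f x 0 + (LINT \<tau>:{0..t}|lborel. Qcoll ph f x \<tau>)))"

definition mass :: "(real \<Rightarrow> real) \<Rightarrow> real" where
  "mass g = (LINT x:{0..}|lborel. g x * sqrt x)"

definition energy :: "(real \<Rightarrow> real) \<Rightarrow> real" where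
  "energy g = (LINT x:{0..}|lborel. x * g x * sqrt x)"

definition conservative :: "(real \<Rightarrow> real \<Rightarrow> real) \<Rightarrow> bool" where
  "conservative f \<longleftrightarrow>
     (\<forall>t\<ge>0. mass (\<lambda>x. f x t) = mass (\<lambda>x. f x 0) \<and> energy (\<lambda>x. f x t) = energy (\<lambda>x. f x 0))"

definition L1norm :: "(real \<Rightarrow> real) \<Rightarrow> real" where
  "L1norm g = (LINT x:{0..}|lborel. \<bar>g x\<bar>)"

definition Linfnorm :: "(real \<Rightarrow> real) \<Rightarrow> ereal" where
  "Linfnorm g = esssup (restrict_space lborel {0..}) (\<lambda>x. ereal \<bar>g x\<bar>)"

definition C_L1 :: "(real \<Rightarrow> real \<Rightarrow> real) \<Rightarrow> bool" where
  "C_L1 f \<longleftrightarrow>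
     (\<forall>t\<ge>0. set_integrable lborel {0..} (\<lambda>x. f x t)) \<and>
     (\<forall>t\<ge>0. ((\<lambda>s. LINT x:{0..}|lborel. \<bar>f x s - f x t\<bar>) \<longlongrightarrow> 0) (at t within {0..}))"

definition kernel_assumption :: "(real \<Rightarrow> real) \<Rightarrow> real \<Rightarrow> real \<Rightarrow> bool" where
  "kernel_assumption ph b0 \<eta> \<longleftrightarrow>
     continuous_on {0..} ph \<and> b0 > 0 \<and> \<eta> \<ge> 1 \<and>
     (\<forall>r\<ge>0. 0 \<le> ph r \<and> ph r \<le> b0 * r powr \<eta> / (1 + r powr \<eta>)) \<and>
     (\<exists>k k'. k 1 = 1 \<and> continuous_on {1..sqrt 2} k' \<and>
        (\<forall>a\<in>{1..sqrt 2}. (k has_real_derivative k' a) (at a within {1..sqrt 2})) \<and>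
        (\<forall>r>0. \<forall>a\<in>{1<..sqrt 2}. ph (a * r) \<le> k a * ph r))"

end

theory Submission
  imports Defs
begin

(* For x > 0 the collision weight satisfies W(x,y,z) sqrt y sqrt z <= 4 b0^2, and it vanishes
   unless x < y + z; this uses nothing but ph <= b0. Dropping the loss term, the mild equation gives
     f(x,t) <= f0(x) + 4 b0^2 int_0^t int int f(y) f(z) (1 + f(x) + f(y + z - x)) dy dz dtau.
   The envelope L(t) = (1 + M0) exp(8 b0^2 int_0^t ||f||_1^2) - 1, with M0 = ||f0||_inf, solves
   L' = 8 b0^2 ||f||_1^2 (1 + L) and L(0) = M0. Hence the excess D = (f - L)_+ satisfies
     int D(x,t) dx <= int_0^t 8 b0^2 ||f(tau)||_1^2 int D(x,tau) dx dtau,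
   and Gronwall's inequality forces D = 0. *)

section \<open>Nonnegative integrals and Gronwall's inequality\<close>

lemma set_integral_nonneg_real:
  fixes g :: "'a \<Rightarrow> real"
  assumes "\<And>x. x \<in> A \<Longrightarrow> 0 \<le> g x"
  shows "0 \<le> (LINT x:A|M. g x)"
  unfolding set_lebesgue_integral_def
  by (rule integral_nonneg_AE) (use assms in \<open>auto simp: indicator_def\<close>)

lemma set_integral_Icc_le_const:
  fixes g :: "real \<Rightarrow> real"
  assumes nonneg: "\<And>x. x \<in> {a..b} \<Longrightarrow> 0 \<le> g x" and le: "\<And>x. x \<in> {a..b} \<Longrightarrow> g x \<le> c"
  shows "(LINT x:{a..b}|lborel. g x) \<le> c * max (b - a) 0"
proof (cases "set_integrable lborel {a..b} g \<and> a \<le> b")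
  case True
  then have "a \<le> b" by simp
  have "(LINT x:{a..b}|lborel. g x) \<le> (LINT x:{a..b}|lborel. c)"
    using True le by (intro set_integral_mono) (auto simp: set_integrable_def emeasure_lborel_Icc_eq)
  also have "\<dots> = c * (b - a)"
    using \<open>a \<le> b\<close> by (simp add: set_integral_const)
  finally show ?thesis using \<open>a \<le> b\<close> by simp
next
  case False
  have "0 \<le> c * max (b - a) 0"
  proof (cases "a \<le> b")
    case True
    then have "0 \<le> c" using nonneg[of a] le[of a] by simp
    then show ?thesis by simp
  qed simp
  moreover have "(LINT x:{a..b}|lborel. g x) = 0"
  proof (cases "a \<le> b")
    case True
    with False show ?thesis
      by (simp add: set_lebesgue_integral_def set_integrable_def not_integrable_integral_eq)
  qed (simp add: set_lebesgue_integral_def)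
  ultimately show ?thesis by simp
qed

lemma ennreal_integral_le_nn_integral:
  fixes h :: "'a \<Rightarrow> real"
  shows "ennreal (integral\<^sup>L M h) \<le> (\<integral>\<^sup>+x. ennreal (h x) \<partial>M)"
proof (cases "integrable M h")
  case True
  have "integral\<^sup>L M h \<le> integral\<^sup>L M (\<lambda>x. max (h x) 0)"
    by (intro integral_mono True) (auto intro: integrable_max True)
  also have "\<dots> = enn2real (\<integral>\<^sup>+x. ennreal (h x) \<partial>M)"
    using True
    by (subst integral_eq_nn_integral) (auto intro!: arg_cong[where f = enn2real] nn_integral_cong simp: max_def ennreal_neg)
  finally have "integral\<^sup>L M h \<le> enn2real (\<integral>\<^sup>+x. ennreal (h x) \<partial>M)" .
  moreover have "(\<integral>\<^sup>+x. ennreal (h x) \<partial>M) \<le> (\<integral>\<^sup>+x. ennreal (norm (h x)) \<partial>M)"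
    by (intro nn_integral_mono) (auto intro: ennreal_leI)
  then have "(\<integral>\<^sup>+x. ennreal (h x) \<partial>M) < \<infinity>"
    using True by (simp add: integrable_iff_bounded order_le_less_trans)
  ultimately show ?thesis
    by (metis ennreal_enn2real ennreal_leI less_top order.strict_iff_not)
qed (simp add: not_integrable_integral_eq)

lemma ennreal_add_le: "0 \<le> a \<Longrightarrow> ennreal (a + b) \<le> ennreal a + ennreal b"
proof (cases "0 \<le> b")
  case False
  then have "ennreal (a + b) \<le> ennreal a" by (intro ennreal_leI) simp
  then show ?thesis by (simp add: add_increasing2)
qed simp

lemma nn_integral_pair_mult:
  fixes f :: "'a \<Rightarrow> ennreal" and g :: "'b \<Rightarrow> ennreal"
  assumes "sigma_finite_measure N" and [measurable]: "f \<in> borel_measurable M" "g \<in> borel_measurable N"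
  shows "(\<integral>\<^sup>+p. f (fst p) * g (snd p) \<partial>(M \<Otimes>\<^sub>M N)) = (\<integral>\<^sup>+x. f x \<partial>M) * (\<integral>\<^sup>+y. g y \<partial>N)"
proof -
  have "(\<integral>\<^sup>+p. f (fst p) * g (snd p) \<partial>(M \<Otimes>\<^sub>M N)) = (\<integral>\<^sup>+x. \<integral>\<^sup>+y. f x * g y \<partial>N \<partial>M)"
    using sigma_finite_measure.nn_integral_fst[OF assms(1), of "\<lambda>p. f (fst p) * g (snd p)" M] by simp
  also have "\<dots> = (\<integral>\<^sup>+x. f x * (\<integral>\<^sup>+y. g y \<partial>N) \<partial>M)"
    by (simp add: nn_integral_cmult)
  also have "\<dots> = (\<integral>\<^sup>+x. f x \<partial>M) * (\<integral>\<^sup>+y. g y \<partial>N)"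
    by (simp add: nn_integral_multc)
  finally show ?thesis .
qed

lemma nn_integral_reflect_le:
  fixes g :: "real \<Rightarrow> ennreal"
  assumes [measurable]: "g \<in> borel_measurable borel"
  shows "(\<integral>\<^sup>+x\<in>{0..}. (if x < c then g (c - x) else 0) \<partial>lborel) \<le> (\<integral>\<^sup>+x\<in>{0..}. g x \<partial>lborel)"
proof -
  define h where "h x = g x * indicator {0..} x" for x
  have [measurable]: "h \<in> borel_measurable borel" unfolding h_def by measurable
  have "(\<integral>\<^sup>+x\<in>{0..}. (if x < c then g (c - x) else 0) \<partial>lborel) \<le> (\<integral>\<^sup>+x. h (c + (-1) * x) \<partial>lborel)"
    by (intro nn_integral_mono) (auto simp: h_def indicator_def)
  also have "\<dots> = (\<integral>\<^sup>+x. h x \<partial>lborel)"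
    using nn_integral_real_affine[of h "-1" c] by simp
  finally show ?thesis unfolding h_def .
qed

lemma nn_integral_Icc_power:
  assumes "0 \<le> t"
  shows "(\<integral>\<^sup>+\<tau>\<in>{0..t}. ennreal (\<tau>^n) \<partial>lborel) = ennreal (t^Suc n / Suc n)"
proof -
  have "integrable lborel (\<lambda>\<tau>. indicator {0..t} \<tau> *\<^sub>R \<tau>^n)"
    by (rule borel_integrable_compact) (auto intro!: continuous_intros)
  then have int: "integrable lborel (\<lambda>\<tau>. \<tau>^n * indicator {0..t} \<tau>)"
    by (simp add: mult.commute)
  have "(\<integral>\<^sup>+\<tau>\<in>{0..t}. ennreal (\<tau>^n) \<partial>lborel) = (\<integral>\<^sup>+\<tau>. ennreal (\<tau>^n * indicator {0..t} \<tau>) \<partial>lborel)"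
    by (intro nn_integral_cong) (simp add: indicator_def)
  also have "\<dots> = ennreal (\<integral>\<tau>. \<tau>^n * indicator {0..t} \<tau> \<partial>lborel)"
    by (rule nn_integral_eq_integral[OF int]) (auto simp: indicator_def)
  also have "\<dots> = ennreal (t^Suc n / Suc n)"
    using integral_power[OF assms, of n] by simp
  finally show ?thesis .
qed

lemma gronwall_nn_integral_iterate:
  fixes E :: "real \<Rightarrow> ennreal"
  assumes B: "\<forall>t\<in>{0..T}. E t \<le> ennreal B" and B0: "0 \<le> B" and c: "0 \<le> c"
    and rec: "\<forall>t\<in>{0..T}. E t \<le> (\<integral>\<^sup>+\<tau>\<in>{0..t}. ennreal c * E \<tau> \<partial>lborel)"
  shows "\<forall>t\<in>{0..T}. E t \<le> ennreal (B * (c * t)^n / fact n)"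
proof (induction n)
  case 0
  then show ?case using B by simp
next
  case (Suc n)
  define K where "K = c * B * c^n / fact n"
  show ?case
  proof
    fix t
    assume t: "t \<in> {0..T}"
    have "E t \<le> (\<integral>\<^sup>+\<tau>\<in>{0..t}. ennreal c * E \<tau> \<partial>lborel)"
      using rec t by blast
    also have "\<dots> \<le> (\<integral>\<^sup>+\<tau>. ennreal K * (ennreal (\<tau>^n) * indicator {0..t} \<tau>) \<partial>lborel)"
    proof (intro nn_integral_mono)
      fix \<tau> :: real
      show "ennreal c * E \<tau> * indicator {0..t} \<tau> \<le> ennreal K * (ennreal (\<tau>^n) * indicator {0..t} \<tau>)"
      proof (cases "\<tau> \<in> {0..t}")
        case True
        then have "E \<tau> \<le> ennreal (B * (c * \<tau>)^n / fact n)"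
          using Suc.IH t by auto
        then have "ennreal c * E \<tau> \<le> ennreal c * ennreal (B * (c * \<tau>)^n / fact n)"
          by (rule mult_left_mono) simp
        also have "\<dots> = ennreal K * ennreal (\<tau>^n)"
          using True c B0 unfolding K_def by (simp add: ennreal_mult[symmetric] power_mult_distrib algebra_simps)
        finally show ?thesis
          using True by simp
      qed simp
    qed
    also have "\<dots> = ennreal K * ennreal (t^Suc n / Suc n)"
      using t by (simp add: nn_integral_cmult nn_integral_Icc_power)
    also have "\<dots> = ennreal (B * (c * t)^Suc n / fact (Suc n))"
      using t c B0 unfolding K_def by (simp add: ennreal_mult[symmetric] power_mult_distrib field_simps)
    finally show "E t \<le> ennreal (B * (c * t)^Suc n / fact (Suc n))" .
  qed
qed

lemma gronwall_nn_integral_zero: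
  fixes E :: "real \<Rightarrow> ennreal"
  assumes B: "\<forall>t\<in>{0..T}. E t \<le> ennreal B" and B0: "0 \<le> B" and c: "0 \<le> c"
    and rec: "\<forall>t\<in>{0..T}. E t \<le> (\<integral>\<^sup>+\<tau>\<in>{0..t}. ennreal c * E \<tau> \<partial>lborel)"
    and t: "t \<in> {0..T}"
  shows "E t = 0"
proof -
  have "E t \<le> ennreal (B * (inverse (fact n) * (c * T)^n))" for n
  proof -
    have "(c * t)^n \<le> (c * T)^n"
      using t c by (intro power_mono mult_left_mono) auto
    then have "B * (c * t)^n / fact n \<le> B * (inverse (fact n) * (c * T)^n)"
      using B0 by (simp add: divide_simps mult_left_mono)
    then show ?thesis
      using gronwall_nn_integral_iterate[OF B B0 c rec] t by (meson ennreal_leI order.trans)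
  qed
  moreover have "(\<lambda>n. B * (inverse (fact n) * (c * T)^n)) \<longlonglongrightarrow> B * 0"
    by (intro tendsto_mult tendsto_const summable_LIMSEQ_zero summable_exp)
  then have "(\<lambda>n. ennreal (B * (inverse (fact n) * (c * T)^n))) \<longlonglongrightarrow> ennreal (B * 0)"
    by (rule tendsto_ennrealI)
  ultimately have "E t \<le> ennreal (B * 0)"
    by (intro LIMSEQ_le_const) auto
  then show ?thesis
    by simp
qed

lemma C_L1_continuous_L1norm:
  assumes "C_L1 f"
  shows "continuous_on {0..} (\<lambda>t. L1norm (\<lambda>x. f x t))"
proof -
  have int: "\<forall>t\<ge>0. set_integrable lborel {0..} (\<lambda>x. f x t)"
    and lim: "\<forall>t\<ge>0. ((\<lambda>s. LINT x:{0..}|lborel. \<bar>f x s - f x t\<bar>) \<longlongrightarrow> 0) (at t within {0..})"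
    using assms unfolding C_L1_def by auto
  have dist: "\<bar>L1norm (\<lambda>x. f x s) - L1norm (\<lambda>x. f x t)\<bar> \<le> (LINT x:{0..}|lborel. \<bar>f x s - f x t\<bar>)"
    if s: "0 \<le> s" and t: "0 \<le> t" for s t
  proof -
    have abs_s: "set_integrable lborel {0..} (\<lambda>x. \<bar>f x s\<bar>)"
      using int s by (auto intro: set_integrable_abs)
    have abs_t: "set_integrable lborel {0..} (\<lambda>x. \<bar>f x t\<bar>)"
      using int t by (auto intro: set_integrable_abs)
    have abs_diff: "set_integrable lborel {0..} (\<lambda>x. \<bar>f x s - f x t\<bar>)"
      using int s t by (auto intro!: set_integrable_abs set_integral_diff(1))
    have diff_abs: "set_integrable lborel {0..} (\<lambda>x. \<bar>f x s\<bar> - \<bar>f x t\<bar>)"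
      using abs_s abs_t by (rule set_integral_diff(1))
    have "L1norm (\<lambda>x. f x s) - L1norm (\<lambda>x. f x t) = (LINT x:{0..}|lborel. \<bar>f x s\<bar> - \<bar>f x t\<bar>)"
      unfolding L1norm_def using abs_s abs_t by (simp add: set_integral_diff)
    then have "\<bar>L1norm (\<lambda>x. f x s) - L1norm (\<lambda>x. f x t)\<bar> \<le> (LINT x:{0..}|lborel. \<bar>\<bar>f x s\<bar> - \<bar>f x t\<bar>\<bar>)"
      using set_integral_norm_bound[OF diff_abs] by (simp only: real_norm_def)
    also have "\<dots> \<le> (LINT x:{0..}|lborel. \<bar>f x s - f x t\<bar>)"
      by (rule set_integral_mono[OF set_integrable_abs[OF diff_abs] abs_diff]) (rule abs_triangle_ineq3)
    finally show ?thesis .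
  qed
  show ?thesis
    unfolding continuous_on_def
  proof
    fix t :: real
    assume t: "t \<in> {0..}"
    have "((\<lambda>s. L1norm (\<lambda>x. f x s) - L1norm (\<lambda>x. f x t)) \<longlongrightarrow> 0) (at t within {0..})"
    proof (rule Lim_null_comparison)
      show "\<forall>\<^sub>F s in at t within {0..}. norm (L1norm (\<lambda>x. f x s) - L1norm (\<lambda>x. f x t)) \<le> (LINT x:{0..}|lborel. \<bar>f x s - f x t\<bar>)"
        unfolding eventually_at_filter using dist t by (auto intro!: always_eventually)
      show "((\<lambda>s. LINT x:{0..}|lborel. \<bar>f x s - f x t\<bar>) \<longlongrightarrow> 0) (at t within {0..})"
        using lim t by auto
    qed
    then show "((\<lambda>s. L1norm (\<lambda>x. f x s)) \<longlongrightarrow> L1norm (\<lambda>x. f x t)) (at t within {0..})"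
      by (simp add: LIM_zero_iff)
  qed
qed

lemma Linfnorm_nonneg: "0 \<le> Linfnorm g"
proof -
  let ?R = "restrict_space lborel {0::real..}"
  have "emeasure lborel {0::real..1} \<le> emeasure lborel {0::real..}"
    by (rule emeasure_mono) auto
  then have "emeasure ?R (space ?R) \<noteq> 0"
    by (subst emeasure_restrict_space) auto
  then have "esssup ?R (\<lambda>x. 0 :: ereal) = 0"
    by (rule esssup_const)
  moreover have "esssup ?R (\<lambda>x. 0 :: ereal) \<le> esssup ?R (\<lambda>x. ereal \<bar>g x\<bar>)"
    by (rule esssup_mono) auto
  ultimately show ?thesis
    unfolding Linfnorm_def by simp
qed

lemma AE_abs_le_Linfnorm: "AE x in lborel. 0 \<le> x \<longrightarrow> ereal \<bar>g x\<bar> \<le> Linfnorm g"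
proof -
  have "AE x in restrict_space lborel {0..}. ereal \<bar>g x\<bar> \<le> Linfnorm g"
    unfolding Linfnorm_def by (rule esssup_AE)
  then show ?thesis
    by (subst (asm) AE_restrict_space_iff) auto
qed

lemma Linfnorm_le:
  assumes [measurable]: "g \<in> borel_measurable lborel"
    and "AE x in lborel. 0 \<le> x \<longrightarrow> \<bar>g x\<bar> \<le> c"
  shows "Linfnorm g \<le> ereal c"
  unfolding Linfnorm_def
proof (rule esssup_I)
  show "(\<lambda>x. ereal \<bar>g x\<bar>) \<in> borel_measurable (restrict_space lborel {0..})"
    by (intro measurable_restrict_space1) measurable
  show "AE x in restrict_space lborel {0..}. ereal \<bar>g x\<bar> \<le> ereal c"
    using assms(2) by (subst AE_restrict_space_iff) (auto elim!: eventually_mono)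
qed

section \<open>Bounds on the collision kernel\<close>

lemma kernel_assumption_bounded:
  assumes "kernel_assumption ph b0 \<eta>" and r: "0 \<le> r"
  shows "0 \<le> ph r \<and> ph r \<le> b0"
proof -
  have b0: "0 < b0" and ph: "\<forall>r\<ge>0. 0 \<le> ph r \<and> ph r \<le> b0 * r powr \<eta> / (1 + r powr \<eta>)"
    using assms(1) unfolding kernel_assumption_def by simp_all
  have "0 < 1 + r powr \<eta>"
    by (simp add: add_pos_nonneg)
  then have "b0 * r powr \<eta> / (1 + r powr \<eta>) \<le> b0"
    using b0 by (simp add: divide_le_eq)
  then show ?thesis
    using ph r by force
qed

lemma Phi_nonneg: "0 \<le> Phi ph a b"
  unfolding Phi_def by simp

lemma Phi_le:
  assumes ph: "\<And>r. 0 \<le> r \<Longrightarrow> 0 \<le> ph r \<and> ph r \<le> b0" and "0 \<le> a" "0 \<le> b"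
  shows "Phi ph a b \<le> 4 * b0^2"
proof -
  have "0 \<le> ph a + ph b" "ph a + ph b \<le> 2 * b0"
    using ph[of a] ph[of b] assms(2,3) by auto
  then have "(ph a + ph b)^2 \<le> (2 * b0)^2"
    by (rule power_mono[rotated])
  then show ?thesis
    unfolding Phi_def by (simp add: power_mult_distrib)
qed

lemma xstar_nonneg: "0 \<le> xstar x y z"
  unfolding xstar_def by simp

lemma W_nonneg: "0 \<le> W ph x y z"
proof (cases "0 < xstar x y z * x * y * z")
  case True
  then have pos: "0 < xstar x y z * (x * y * z)"
    by (simp add: mult_ac)
  then have "0 < xstar x y z"
    using xstar_nonneg[of x y z] by (cases "xstar x y z = 0") auto
  then have "0 < x * y * z"
    using zero_less_mult_pos[OF pos] by blast
  then show ?thesis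
    unfolding W_def if_P[OF True]
    by (intro mult_nonneg_nonneg set_integral_nonneg_real Phi_nonneg) simp_all
next
  case False
  have nn: "0 \<le> Phi ph a b / sqrt (u * v)" if "0 < u" "0 < v" for a b u v
    using that by (intro divide_nonneg_nonneg Phi_nonneg) simp
  show ?thesis
    unfolding W_def if_not_P[OF False]
    by (simp only: split: if_split) (auto intro: nn)
qed

lemma Ystar_nonneg: "0 \<le> Ystar x y z s \<theta>"
  unfolding Ystar_def Let_def by (rule if_split[THEN iffD2]) (intro conjI impI norm_ge_zero order_refl)

lemma angular_integral_Phi_le:
  assumes ph: "\<And>r. 0 \<le> r \<Longrightarrow> 0 \<le> ph r \<and> ph r \<le> b0" and "0 \<le> s"
  shows "(LINT \<theta>:{0..2*pi}|lborel. Phi ph (sqrt 2 * s) (sqrt 2 * Ystar x y z s \<theta>)) \<le> 8 * pi * b0^2"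
proof -
  have "(LINT \<theta>:{0..2*pi}|lborel. Phi ph (sqrt 2 * s) (sqrt 2 * Ystar x y z s \<theta>)) \<le> 4 * b0^2 * max (2 * pi - 0) 0"
    using assms(2) by (intro set_integral_Icc_le_const Phi_nonneg Phi_le[OF ph]) (auto simp: Ystar_nonneg)
  then show ?thesis
    by (simp add: mult_ac)
qed

lemma W_sqrt_le_regular:
  assumes ph: "\<And>r. 0 \<le> r \<Longrightarrow> 0 \<le> ph r \<and> ph r \<le> b0"
    and x: "0 < x" and y: "0 < y" and z: "0 < z" and regular: "0 < xstar x y z * x * y * z"
  shows "W ph x y z * sqrt y * sqrt z \<le> 4 * b0^2"
proof -
  have b0: "0 \<le> b0" using ph[of 0] by simp
  define lo where "lo = max \<bar>sqrt x - sqrt y\<bar> \<bar>sqrt (xstar x y z) - sqrt z\<bar>"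
  define hi where "hi = min (sqrt x + sqrt y) (sqrt (xstar x y z) + sqrt z)"
  define I where "I s = (LINT \<theta>:{0..2*pi}|lborel. Phi ph (sqrt 2 * s) (sqrt 2 * Ystar x y z s \<theta>))" for s
  have I: "0 \<le> I s \<and> I s \<le> 8 * pi * b0^2" if "s \<in> {lo..hi}" for s
  proof -
    have "0 \<le> s" using that unfolding lo_def by (auto simp: le_max_iff_disj)
    then show ?thesis
      unfolding I_def by (intro conjI set_integral_nonneg_real Phi_nonneg angular_integral_Phi_le[OF ph])
  qed
  (* the s-interval has length at most 2 sqrt x, which cancels the singular prefactor *)
  have "hi \<le> sqrt x + sqrt y" "sqrt y - sqrt x \<le> lo"
    unfolding hi_def lo_def by auto
  then have "max (hi - lo) 0 \<le> 2 * sqrt x" using x by simp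
  have "W ph x y z = 1 / (4 * pi * sqrt (x * y * z)) * (LINT s:{lo..hi}|lborel. I s)"
    unfolding W_def if_P[OF regular] lo_def hi_def I_def ..
  moreover have "1 / (4 * pi * sqrt (x * y * z)) * v * sqrt y * sqrt z = v / (4 * pi * sqrt x)" for v
    using x y z by (simp add: real_sqrt_mult field_simps)
  ultimately have "W ph x y z * sqrt y * sqrt z = (LINT s:{lo..hi}|lborel. I s) / (4 * pi * sqrt x)"
    by simp
  also have "\<dots> \<le> (8 * pi * b0^2 * max (hi - lo) 0) / (4 * pi * sqrt x)"
    using x I by (intro divide_right_mono set_integral_Icc_le_const) auto
  also have "\<dots> \<le> (8 * pi * b0^2 * (2 * sqrt x)) / (4 * pi * sqrt x)"
    using x b0 \<open>max (hi - lo) 0 \<le> 2 * sqrt x\<close> by (intro divide_right_mono mult_left_mono) auto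
  also have "\<dots> = 4 * b0^2"
    using x by (simp add: field_simps)
  finally show ?thesis .
qed

lemma W_sqrt_le:
  assumes ph: "\<And>r. 0 \<le> r \<Longrightarrow> 0 \<le> ph r \<and> ph r \<le> b0"
    and x: "0 < x" and y: "0 \<le> y" and z: "0 \<le> z"
  shows "W ph x y z * sqrt y * sqrt z \<le> (if x < y + z then 4 * b0^2 else 0)"
proof (cases "0 < xstar x y z * x * y * z")
  case True
  then have "xstar x y z \<noteq> 0" "y \<noteq> 0" "z \<noteq> 0"
    by auto
  then have "0 < y" "0 < z" "0 < xstar x y z"
    using y z xstar_nonneg[of x y z] by auto
  moreover from \<open>0 < xstar x y z\<close> have "x < y + z"
    unfolding xstar_def by (simp add: max_def split: if_splits)
  ultimately show ?thesis
    using W_sqrt_le_regular[OF ph x _ _ True] by simp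
next
  case False
  show ?thesis
  proof (cases "y = 0 \<or> z = 0")
    case False
    with x have "W ph x y z = 0"
      unfolding W_def if_not_P[OF \<open>\<not> 0 < xstar x y z * x * y * z\<close>] by simp
    then show ?thesis by simp
  qed auto
qed

section \<open>Excess of a mild solution over the envelope\<close>

locale bounded_mild_solution =
  fixes ph :: "real \<Rightarrow> real" and f :: "real \<Rightarrow> real \<Rightarrow> real" and b0 M0 :: real
  assumes kernel_bounded: "\<And>r. 0 \<le> r \<Longrightarrow> 0 \<le> ph r \<and> ph r \<le> b0"
    and mild: "mild_solution ph f"
    and continuous_L1: "C_L1 f"
    and initial_le: "AE x in lborel. 0 \<le> x \<longrightarrow> f x 0 \<le> M0"
    and initial_bound_nonneg: "0 \<le> M0"
begin

lemma f_nonneg: "0 \<le> x \<Longrightarrow> 0 \<le> t \<Longrightarrow> 0 \<le> f x t"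
  using mild unfolding mild_solution_def by blast

lemma f_measurable [measurable]: "(\<lambda>p. f (fst p) (snd p)) \<in> borel_measurable (lborel \<Otimes>\<^sub>M lborel)"
  using mild unfolding mild_solution_def lborel_prod by blast

lemma f_measurable_split [measurable]: "case_prod f \<in> borel_measurable (lborel \<Otimes>\<^sub>M lborel)"
  using f_measurable by (simp add: case_prod_beta')

lemma f_integrable: "0 \<le> t \<Longrightarrow> set_integrable lborel {0..} (\<lambda>x. f x t)"
  using continuous_L1 unfolding C_L1_def by blast

lemma AE_mild_equation:
  "AE x in lborel. 0 \<le> x \<longrightarrow> (\<forall>t\<ge>0. f x t = f x 0 + (LINT \<tau>:{0..t}|lborel. Qcoll ph f x \<tau>))"
proof -
  obtain Z where "Z \<in> null_sets lborel"
    and "\<forall>x\<in>{0..} - Z. \<forall>t\<ge>0. f x t = f x 0 + (LINT \<tau>:{0..t}|lborel. Qcoll ph f x \<tau>)"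
    using mild unfolding mild_solution_def by blast
  then show ?thesis
    by (auto elim!: eventually_mono[OF AE_not_in])
qed

definition norm1 :: "real \<Rightarrow> real" where
  "norm1 \<tau> = L1norm (\<lambda>x. f x \<tau>)"

definition envelope :: "real \<Rightarrow> real" where
  "envelope t = (1 + M0) * exp (8 * b0^2 * (LINT \<tau>:{0..t}|lborel. (norm1 \<tau>)^2)) - 1"

definition excess :: "real \<Rightarrow> real \<Rightarrow> real" where
  "excess x \<tau> = max (f x \<tau> - envelope \<tau>) 0"

definition excess_mass :: "real \<Rightarrow> ennreal" where
  "excess_mass \<tau> = (\<integral>\<^sup>+x\<in>{0..}. ennreal (excess x \<tau>) \<partial>lborel)"

(* the part of the gain term f(y) f(z) f(xstar x y z) above the envelope, where xstar x y z = y + z - x *)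
definition excess_gain :: "real \<Rightarrow> real \<Rightarrow> ennreal" where
  "excess_gain x \<tau> = (\<integral>\<^sup>+p\<in>{0..}\<times>{0..}.
     ennreal (f (fst p) \<tau> * f (snd p) \<tau> * (if x < fst p + snd p then excess (fst p + snd p - x) \<tau> else 0))
     \<partial>(lborel \<Otimes>\<^sub>M lborel))"

lemma excess_nonneg: "0 \<le> excess x \<tau>"
  unfolding excess_def by simp

lemma norm1_measurable [measurable]: "norm1 \<in> borel_measurable borel"
proof -
  have "(\<lambda>\<tau>. \<integral>x. indicator {0..} x *\<^sub>R \<bar>f x \<tau>\<bar> \<partial>lborel) \<in> borel_measurable borel"
    by measurable
  then show ?thesis
    unfolding norm1_def[abs_def] L1norm_def set_lebesgue_integral_def .
qed

lemma envelope_measurable [measurable]: "envelope \<in> borel_measurable borel"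
proof -
  have "(\<lambda>t. \<integral>\<tau>. (if 0 \<le> \<tau> \<and> \<tau> \<le> t then (norm1 \<tau>)^2 else 0) \<partial>lborel) \<in> borel_measurable borel"
    by measurable
  moreover have "(\<lambda>t. \<integral>\<tau>. (if 0 \<le> \<tau> \<and> \<tau> \<le> t then (norm1 \<tau>)^2 else 0) \<partial>lborel) = (\<lambda>t. LINT \<tau>:{0..t}|lborel. (norm1 \<tau>)^2)"
    unfolding set_lebesgue_integral_def
    by (intro ext Bochner_Integration.integral_cong) (auto simp: indicator_def)
  ultimately have [measurable]: "(\<lambda>t. LINT \<tau>:{0..t}|lborel. (norm1 \<tau>)^2) \<in> borel_measurable borel"
    by simp
  show ?thesis
    unfolding envelope_def[abs_def] by measurable
qed

lemma excess_measurable [measurable]: "case_prod excess \<in> borel_measurable (lborel \<Otimes>\<^sub>M lborel)"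
  unfolding excess_def[abs_def] by measurable

lemma excess_gain_measurable [measurable]: "case_prod excess_gain \<in> borel_measurable (lborel \<Otimes>\<^sub>M lborel)"
proof -
  have "sigma_finite_measure (lborel \<Otimes>\<^sub>M (lborel :: real measure))"
    by (intro sigma_finite_pair_measure lborel.sigma_finite_measure_axioms)
  moreover have "(\<lambda>(q, p). ennreal (f (fst p) (snd q) * f (snd p) (snd q) *
        (if fst q < fst p + snd p then excess (fst p + snd p - fst q) (snd q) else 0)) * indicator ({0..}\<times>{0..}) p)
      \<in> borel_measurable ((lborel \<Otimes>\<^sub>M lborel) \<Otimes>\<^sub>M (lborel \<Otimes>\<^sub>M lborel))"
    by measurable
  ultimately have "(\<lambda>q. \<integral>\<^sup>+p. ennreal (f (fst p) (snd q) * f (snd p) (snd q) *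
        (if fst q < fst p + snd p then excess (fst p + snd p - fst q) (snd q) else 0)) * indicator ({0..}\<times>{0..}) p
      \<partial>(lborel \<Otimes>\<^sub>M lborel)) \<in> borel_measurable (lborel \<Otimes>\<^sub>M lborel)"
    by (rule sigma_finite_measure.borel_measurable_nn_integral)
  then show ?thesis
    unfolding excess_gain_def[abs_def] by (simp add: case_prod_beta')
qed

lemma norm1_nonneg: "0 \<le> norm1 \<tau>"
  unfolding norm1_def L1norm_def by (rule set_integral_nonneg_real) simp

lemma continuous_on_norm1: "continuous_on {0..} norm1"
  using C_L1_continuous_L1norm[OF continuous_L1] unfolding norm1_def[abs_def] .

lemma nn_integral_eq_norm1:
  assumes "0 \<le> \<tau>"
  shows "(\<integral>\<^sup>+x\<in>{0..}. ennreal (f x \<tau>) \<partial>lborel) = ennreal (norm1 \<tau>)"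
proof -
  have int: "integrable lborel (\<lambda>x. indicator {0..} x * f x \<tau>)"
    using f_integrable[OF assms] unfolding set_integrable_def by simp
  have "(\<integral>\<^sup>+x\<in>{0..}. ennreal (f x \<tau>) \<partial>lborel) = (\<integral>\<^sup>+x. ennreal (indicator {0..} x * f x \<tau>) \<partial>lborel)"
    by (intro nn_integral_cong) (auto simp: indicator_def)
  also have "\<dots> = ennreal (\<integral>x. indicator {0..} x * f x \<tau> \<partial>lborel)"
    by (rule nn_integral_eq_integral[OF int]) (use f_nonneg assms in \<open>auto simp: indicator_def\<close>)
  also have "(\<integral>x. indicator {0..} x * f x \<tau> \<partial>lborel) = norm1 \<tau>"
    unfolding norm1_def L1norm_def set_lebesgue_integral_def
    by (intro Bochner_Integration.integral_cong) (use f_nonneg assms in \<open>auto simp: indicator_def\<close>)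
  finally show ?thesis .
qed

lemma nn_integral_product_eq_norm1_sq:
  assumes "0 \<le> \<tau>"
  shows "(\<integral>\<^sup>+p\<in>{0..}\<times>{0..}. ennreal (f (fst p) \<tau> * f (snd p) \<tau>) \<partial>(lborel \<Otimes>\<^sub>M lborel)) = ennreal ((norm1 \<tau>)^2)"
proof -
  have "(\<integral>\<^sup>+p\<in>{0..}\<times>{0..}. ennreal (f (fst p) \<tau> * f (snd p) \<tau>) \<partial>(lborel \<Otimes>\<^sub>M lborel))
      = (\<integral>\<^sup>+p. (ennreal (f (fst p) \<tau>) * indicator {0..} (fst p)) * (ennreal (f (snd p) \<tau>) * indicator {0..} (snd p)) \<partial>(lborel \<Otimes>\<^sub>M lborel))"
    by (intro nn_integral_cong) (use f_nonneg assms in \<open>auto simp: indicator_def ennreal_mult\<close>)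
  also have "\<dots> = (\<integral>\<^sup>+x\<in>{0..}. ennreal (f x \<tau>) \<partial>lborel) * (\<integral>\<^sup>+x\<in>{0..}. ennreal (f x \<tau>) \<partial>lborel)"
    by (rule nn_integral_pair_mult) (simp_all add: lborel.sigma_finite_measure_axioms)
  also have "\<dots> = ennreal ((norm1 \<tau>)^2)"
    using norm1_nonneg by (simp add: nn_integral_eq_norm1[OF assms] ennreal_mult[symmetric] power2_eq_square)
  finally show ?thesis .
qed

lemma integral_norm1_sq_eq:
  assumes "0 \<le> t"
  shows "(LINT \<tau>:{0..t}|lborel. (norm1 \<tau>)^2) = integral {0..t} (\<lambda>\<tau>. (norm1 \<tau>)^2)"
proof -
  have "continuous_on {0..t} (\<lambda>\<tau>. (norm1 \<tau>)^2)"
    by (intro continuous_intros continuous_on_subset[OF continuous_on_norm1]) auto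
  then have "set_integrable lborel {0..t} (\<lambda>\<tau>. (norm1 \<tau>)^2)"
    unfolding set_integrable_def by (intro borel_integrable_compact) auto
  then show ?thesis
    by (rule set_borel_integral_eq_integral(2))
qed

lemma envelope_ge: "0 \<le> t \<Longrightarrow> M0 \<le> envelope t"
proof -
  assume "0 \<le> t"
  have "0 \<le> (LINT \<tau>:{0..t}|lborel. (norm1 \<tau>)^2)"
    by (rule set_integral_nonneg_real) simp
  then have "1 \<le> exp (8 * b0^2 * (LINT \<tau>:{0..t}|lborel. (norm1 \<tau>)^2))"
    by simp
  then have "(1 + M0) * 1 \<le> (1 + M0) * exp (8 * b0^2 * (LINT \<tau>:{0..t}|lborel. (norm1 \<tau>)^2))"
    using initial_bound_nonneg by (intro mult_left_mono) auto
  then show ?thesis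
    unfolding envelope_def by simp
qed

lemma envelope_nonneg: "0 \<le> t \<Longrightarrow> 0 \<le> envelope t"
  using envelope_ge initial_bound_nonneg by fastforce

lemma envelope_has_integral:
  assumes t: "0 \<le> t"
  shows "((\<lambda>\<tau>. 8 * b0^2 * (norm1 \<tau>)^2 * (1 + envelope \<tau>)) has_integral (envelope t - M0)) {0..t}"
proof -
  define S where "S u = integral {0..u} (\<lambda>\<tau>. (norm1 \<tau>)^2)" for u
  define E where "E u = (1 + M0) * exp (8 * b0^2 * S u)" for u
  have "(E has_real_derivative 8 * b0^2 * (norm1 u)^2 * (1 + envelope u)) (at u within {0..t})"
    if u: "u \<in> {0..t}" for u
  proof -
    have "continuous_on {0..t} (\<lambda>\<tau>. (norm1 \<tau>)^2)"
      by (intro continuous_intros continuous_on_subset[OF continuous_on_norm1]) auto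
    then have "(S has_real_derivative (norm1 u)^2) (at u within {0..t})"
      unfolding S_def has_real_derivative_iff_has_vector_derivative
      by (rule integral_has_vector_derivative[OF _ u])
    then have "(E has_real_derivative (1 + M0) * (exp (8 * b0^2 * S u) * (8 * b0^2 * (norm1 u)^2))) (at u within {0..t})"
      unfolding E_def by (intro DERIV_cmult DERIV_chain2[OF DERIV_exp])
    moreover have "envelope u = E u - 1"
      using u integral_norm1_sq_eq[of u] unfolding envelope_def E_def S_def by simp
    ultimately show ?thesis
      unfolding E_def by (simp add: algebra_simps)
  qed
  then have "((\<lambda>\<tau>. 8 * b0^2 * (norm1 \<tau>)^2 * (1 + envelope \<tau>)) has_integral (E t - E 0)) {0..t}"
    by (intro fundamental_theorem_of_calculus[OF t]) (simp add: has_real_derivative_iff_has_vector_derivative)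
  moreover have "E t - E 0 = envelope t - M0"
    using integral_norm1_sq_eq[OF t] unfolding E_def S_def envelope_def by simp
  ultimately show ?thesis by simp
qed

lemma nn_integral_envelope_part_le:
  assumes t: "0 \<le> t"
  shows "(\<integral>\<^sup>+\<tau>\<in>{0..t}. ennreal (4 * b0^2 * (norm1 \<tau>)^2 * (1 + 2 * envelope \<tau>)) \<partial>lborel) \<le> ennreal (envelope t - M0)"
proof -
  have "(\<integral>\<^sup>+\<tau>\<in>{0..t}. ennreal (4 * b0^2 * (norm1 \<tau>)^2 * (1 + 2 * envelope \<tau>)) \<partial>lborel)
      \<le> (\<integral>\<^sup>+\<tau>. ennreal (indicator {0..t} \<tau> * (8 * b0^2 * (norm1 \<tau>)^2 * (1 + envelope \<tau>))) \<partial>lborel)"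
  proof (intro nn_integral_mono)
    fix \<tau> :: real
    have "4 * b0^2 * (norm1 \<tau>)^2 * (1 + 2 * envelope \<tau>) \<le> 4 * b0^2 * (norm1 \<tau>)^2 * (2 + 2 * envelope \<tau>)"
      by (intro mult_left_mono) auto
    then show "ennreal (4 * b0^2 * (norm1 \<tau>)^2 * (1 + 2 * envelope \<tau>)) * indicator {0..t} \<tau>
        \<le> ennreal (indicator {0..t} \<tau> * (8 * b0^2 * (norm1 \<tau>)^2 * (1 + envelope \<tau>)))"
      by (auto simp: indicator_def algebra_simps intro!: ennreal_leI)
  qed
  also have "\<dots> = ennreal (envelope t - M0)"
    using envelope_has_integral[OF t] envelope_nonneg
    by (intro nn_integral_has_integral_lebesgue) (auto intro!: mult_nonneg_nonneg)
  finally show ?thesis .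
qed

lemma collision_integrand_le:
  assumes x: "0 < x" and \<tau>: "0 \<le> \<tau>" and y: "0 \<le> y" and z: "0 \<le> z"
  shows "W ph x y z * (gain f x y z \<tau> - loss f x y z \<tau>) * sqrt y * sqrt z
     \<le> 4 * b0^2 * (f y \<tau> * f z \<tau>) * (1 + 2 * envelope \<tau> + excess x \<tau>)
       + 4 * b0^2 * (f y \<tau> * f z \<tau> * (if x < y + z then excess (y + z - x) \<tau> else 0))"
proof -
  have f: "0 \<le> f y \<tau>" "0 \<le> f z \<tau>" "0 \<le> f x \<tau>" "0 \<le> f (xstar x y z) \<tau>"
    using f_nonneg x y z \<tau> xstar_nonneg by auto
  then have gain: "0 \<le> gain f x y z \<tau>" and loss: "0 \<le> loss f x y z \<tau>"
    unfolding gain_def loss_def by simp_all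
  have "W ph x y z * (gain f x y z \<tau> - loss f x y z \<tau>) * sqrt y * sqrt z
      \<le> (W ph x y z * sqrt y * sqrt z) * gain f x y z \<tau>"
    using W_nonneg[of ph x y z] loss y z
    by (simp add: algebra_simps mult_right_mono mult_left_mono mult_nonneg_nonneg)
  also have "\<dots> \<le> (if x < y + z then 4 * b0^2 else 0) * gain f x y z \<tau>"
    by (rule mult_right_mono[OF W_sqrt_le[OF kernel_bounded x y z] gain])
  also have "\<dots> \<le> 4 * b0^2 * (f y \<tau> * f z \<tau>) * (1 + 2 * envelope \<tau> + excess x \<tau>)
       + 4 * b0^2 * (f y \<tau> * f z \<tau> * (if x < y + z then excess (y + z - x) \<tau> else 0))"
  proof (cases "x < y + z")
    case True
    then have "xstar x y z = y + z - x"
      unfolding xstar_def by simp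
    then have "1 + f x \<tau> + f (xstar x y z) \<tau> \<le> (1 + 2 * envelope \<tau> + excess x \<tau>) + excess (y + z - x) \<tau>"
      unfolding excess_def by simp
    then have "4 * b0^2 * (f y \<tau> * f z \<tau> * (1 + f x \<tau> + f (xstar x y z) \<tau>))
        \<le> 4 * b0^2 * (f y \<tau> * f z \<tau> * ((1 + 2 * envelope \<tau> + excess x \<tau>) + excess (y + z - x) \<tau>))"
      using f by (intro mult_left_mono) simp_all
    then show ?thesis
      using True unfolding gain_def by (simp add: algebra_simps)
  next
    case False
    have "0 \<le> 4 * b0^2 * (f y \<tau> * f z \<tau>) * (1 + 2 * envelope \<tau> + excess x \<tau>)"
      using f envelope_nonneg[OF \<tau>] by (simp add: excess_def)
    then show ?thesis
      using False by simp
  qed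
  finally show ?thesis .
qed

lemma Qcoll_le:
  assumes x: "0 < x" and \<tau>: "0 \<le> \<tau>"
  shows "ennreal (Qcoll ph f x \<tau>) \<le> ennreal (4 * b0^2 * (norm1 \<tau>)^2 * (1 + 2 * envelope \<tau>))
    + ennreal (4 * b0^2 * (norm1 \<tau>)^2) * ennreal (excess x \<tau>) + ennreal (4 * b0^2) * excess_gain x \<tau>"
proof -
  define F where "F p = W ph x (fst p) (snd p) * (gain f x (fst p) (snd p) \<tau> - loss f x (fst p) (snd p) \<tau>)
    * sqrt (fst p) * sqrt (snd p)" for p
  define P where "P p = f (fst p) \<tau> * f (snd p) \<tau>" for p
  define R where "R p = (if x < fst p + snd p then excess (fst p + snd p - x) \<tau> else 0)" for p
  define c where "c = 4 * b0^2 * (1 + 2 * envelope \<tau> + excess x \<tau>)"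
  have c: "0 \<le> c"
    unfolding c_def using envelope_nonneg[OF \<tau>] excess_nonneg[of x \<tau>] by simp
  have "ennreal (Qcoll ph f x \<tau>) \<le> (\<integral>\<^sup>+p. ennreal (indicator ({0..}\<times>{0..}) p *\<^sub>R F p) \<partial>(lborel \<Otimes>\<^sub>M lborel))"
    unfolding Qcoll_def set_lebesgue_integral_def F_def by (rule ennreal_integral_le_nn_integral)
  also have "\<dots> \<le> (\<integral>\<^sup>+p. ennreal c * (ennreal (P p) * indicator ({0..}\<times>{0..}) p)
      + ennreal (4 * b0^2) * (ennreal (P p * R p) * indicator ({0..}\<times>{0..}) p) \<partial>(lborel \<Otimes>\<^sub>M lborel))"
  proof (intro nn_integral_mono)
    fix p :: "real \<times> real"
    show "ennreal (indicator ({0..}\<times>{0..}) p *\<^sub>R F p) \<le> ennreal c * (ennreal (P p) * indicator ({0..}\<times>{0..}) p)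
      + ennreal (4 * b0^2) * (ennreal (P p * R p) * indicator ({0..}\<times>{0..}) p)"
    proof (cases "p \<in> {0..}\<times>{0..}")
      case True
      then have y: "0 \<le> fst p" and z: "0 \<le> snd p"
        by auto
      then have "0 \<le> P p" "0 \<le> R p"
        unfolding P_def R_def using f_nonneg \<tau> excess_nonneg by auto
      moreover have "F p \<le> c * P p + 4 * b0^2 * (P p * R p)"
        unfolding F_def c_def P_def R_def
        using collision_integrand_le[OF x \<tau> y z] by (simp add: algebra_simps)
      ultimately show ?thesis
        using True c by (simp add: ennreal_leI ennreal_plus[symmetric] ennreal_mult[symmetric] del: ennreal_plus)
    qed simp
  qed
  also have "\<dots> = ennreal c * (\<integral>\<^sup>+p\<in>{0..}\<times>{0..}. ennreal (P p) \<partial>(lborel \<Otimes>\<^sub>M lborel))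
      + ennreal (4 * b0^2) * excess_gain x \<tau>"
    unfolding excess_gain_def P_def R_def
    by (simp add: nn_integral_add nn_integral_cmult)
  also have "\<dots> = ennreal (4 * b0^2 * (norm1 \<tau>)^2 * (1 + 2 * envelope \<tau>))
      + ennreal (4 * b0^2 * (norm1 \<tau>)^2) * ennreal (excess x \<tau>) + ennreal (4 * b0^2) * excess_gain x \<tau>"
  proof -
    have "ennreal c * ennreal ((norm1 \<tau>)^2)
        = ennreal (4 * b0^2 * (norm1 \<tau>)^2 * (1 + 2 * envelope \<tau>)) + ennreal (4 * b0^2 * (norm1 \<tau>)^2) * ennreal (excess x \<tau>)"
      using c envelope_nonneg[OF \<tau>] excess_nonneg[of x \<tau>] unfolding c_def
      by (simp add: ennreal_mult[symmetric] ennreal_plus[symmetric] algebra_simps del: ennreal_plus)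
    then show ?thesis
      unfolding P_def using nn_integral_product_eq_norm1_sq[OF \<tau>] by simp
  qed
  finally show ?thesis .
qed

lemma excess_le:
  assumes x: "0 < x" and t: "0 \<le> t" and initial: "f x 0 \<le> M0"
    and equation: "f x t = f x 0 + (LINT \<tau>:{0..t}|lborel. Qcoll ph f x \<tau>)"
  shows "ennreal (excess x t) \<le> (\<integral>\<^sup>+\<tau>\<in>{0..t}.
    ennreal (4 * b0^2 * (norm1 \<tau>)^2) * ennreal (excess x \<tau>) + ennreal (4 * b0^2) * excess_gain x \<tau> \<partial>lborel)"
    (is "_ \<le> ?R")
proof -
  have "ennreal (LINT \<tau>:{0..t}|lborel. Qcoll ph f x \<tau>)
      \<le> (\<integral>\<^sup>+\<tau>. ennreal (indicator {0..t} \<tau> *\<^sub>R Qcoll ph f x \<tau>) \<partial>lborel)"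
    unfolding set_lebesgue_integral_def by (rule ennreal_integral_le_nn_integral)
  also have "\<dots> \<le> (\<integral>\<^sup>+\<tau>. ennreal (4 * b0^2 * (norm1 \<tau>)^2 * (1 + 2 * envelope \<tau>)) * indicator {0..t} \<tau>
      + (ennreal (4 * b0^2 * (norm1 \<tau>)^2) * ennreal (excess x \<tau>) + ennreal (4 * b0^2) * excess_gain x \<tau>)
        * indicator {0..t} \<tau> \<partial>lborel)"
  proof (intro nn_integral_mono)
    fix \<tau> :: real
    show "ennreal (indicator {0..t} \<tau> *\<^sub>R Qcoll ph f x \<tau>)
      \<le> ennreal (4 * b0^2 * (norm1 \<tau>)^2 * (1 + 2 * envelope \<tau>)) * indicator {0..t} \<tau>
      + (ennreal (4 * b0^2 * (norm1 \<tau>)^2) * ennreal (excess x \<tau>) + ennreal (4 * b0^2) * excess_gain x \<tau>)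
        * indicator {0..t} \<tau>"
      using Qcoll_le[OF x, of \<tau>] by (cases "\<tau> \<in> {0..t}") (simp_all add: add.assoc)
  qed
  also have "\<dots> = (\<integral>\<^sup>+\<tau>\<in>{0..t}. ennreal (4 * b0^2 * (norm1 \<tau>)^2 * (1 + 2 * envelope \<tau>)) \<partial>lborel) + ?R"
    by (rule nn_integral_add) measurable
  also have "\<dots> \<le> ennreal (envelope t - M0) + ?R"
    by (intro add_right_mono nn_integral_envelope_part_le[OF t])
  finally have "ennreal (LINT \<tau>:{0..t}|lborel. Qcoll ph f x \<tau>) \<le> ennreal (envelope t - M0) + ?R" .
  then have "ennreal (f x t) \<le> ennreal M0 + (ennreal (envelope t - M0) + ?R)"
    unfolding equation using f_nonneg[of x 0] x initial
    by (intro order.trans[OF ennreal_add_le] add_mono ennreal_leI) simp_all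
  also have "\<dots> = ennreal (envelope t) + ?R"
    using initial_bound_nonneg envelope_ge[OF t]
    by (simp add: add.assoc[symmetric] ennreal_plus[symmetric] del: ennreal_plus)
  finally have "ennreal (f x t) \<le> ennreal (envelope t) + ?R" .
  moreover have "ennreal (excess x t) = ennreal (f x t) - ennreal (envelope t)"
    unfolding excess_def using envelope_nonneg[OF t] by (simp add: ennreal_minus max_def ennreal_neg)
  ultimately show ?thesis
    by (simp add: ennreal_minus_le_iff)
qed

lemma nn_integral_reflected_excess_le:
  assumes \<tau>: "0 \<le> \<tau>" and y: "0 \<le> y" and z: "0 \<le> z"
  shows "(\<integral>\<^sup>+x\<in>{0..}. ennreal (f y \<tau> * f z \<tau> * (if x < y + z then excess (y + z - x) \<tau> else 0)) \<partial>lborel)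
    \<le> ennreal (f y \<tau> * f z \<tau>) * excess_mass \<tau>"
proof -
  define P where "P = f y \<tau> * f z \<tau>"
  have "0 \<le> P"
    unfolding P_def using f_nonneg \<tau> y z by auto
  then have "ennreal (P * e) * i = ennreal P * (ennreal e * i)" if "0 \<le> e" for e and i :: ennreal
    using that by (simp add: ennreal_mult mult.assoc)
  then have "(\<integral>\<^sup>+x\<in>{0..}. ennreal (P * (if x < y + z then excess (y + z - x) \<tau> else 0)) \<partial>lborel)
      = (\<integral>\<^sup>+x. ennreal P * ((if x < y + z then ennreal (excess (y + z - x) \<tau>) else 0) * indicator {0..} x) \<partial>lborel)"
    by (intro nn_integral_cong) (simp add: excess_nonneg del: ennreal_mult' ennreal_mult'')
  also have "\<dots> = ennreal P * (\<integral>\<^sup>+x\<in>{0..}. (if x < y + z then ennreal (excess (y + z - x) \<tau>) else 0) \<partial>lborel)"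
    by (rule nn_integral_cmult) measurable
  also have "\<dots> \<le> ennreal P * excess_mass \<tau>"
    unfolding excess_mass_def by (intro mult_left_mono nn_integral_reflect_le) simp_all
  finally show ?thesis
    unfolding P_def .
qed

lemma excess_gain_mass_le:
  assumes \<tau>: "0 \<le> \<tau>"
  shows "(\<integral>\<^sup>+x\<in>{0..}. excess_gain x \<tau> \<partial>lborel) \<le> ennreal ((norm1 \<tau>)^2) * excess_mass \<tau>"
proof -
  define h where "h x p = ennreal (f (fst p) \<tau> * f (snd p) \<tau> * (if x < fst p + snd p then excess (fst p + snd p - x) \<tau> else 0))
    * indicator ({0..}\<times>{0..}) p * indicator {0..} x" for x and p :: "real \<times> real"
  have h_measurable: "case_prod h \<in> borel_measurable (lborel \<Otimes>\<^sub>M (lborel \<Otimes>\<^sub>M lborel))"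
    unfolding h_def by measurable
  have "pair_sigma_finite lborel (lborel \<Otimes>\<^sub>M (lborel :: real measure))"
    unfolding pair_sigma_finite_def
    by (intro conjI sigma_finite_pair_measure lborel.sigma_finite_measure_axioms)
  note Fubini = pair_sigma_finite.Fubini'[OF this h_measurable]
  have "(\<integral>\<^sup>+x\<in>{0..}. excess_gain x \<tau> \<partial>lborel) = (\<integral>\<^sup>+x. \<integral>\<^sup>+p. h x p \<partial>(lborel \<Otimes>\<^sub>M lborel) \<partial>lborel)"
    unfolding excess_gain_def h_def by (intro nn_integral_cong nn_integral_multc[symmetric]) measurable
  also have "\<dots> = (\<integral>\<^sup>+p. \<integral>\<^sup>+x. h x p \<partial>lborel \<partial>(lborel \<Otimes>\<^sub>M lborel))"
    by (rule Fubini[symmetric])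
  also have "\<dots> \<le> (\<integral>\<^sup>+p. ennreal (f (fst p) \<tau> * f (snd p) \<tau>) * indicator ({0..}\<times>{0..}) p * excess_mass \<tau> \<partial>(lborel \<Otimes>\<^sub>M lborel))"
  proof (intro nn_integral_mono)
    fix p :: "real \<times> real"
    show "(\<integral>\<^sup>+x. h x p \<partial>lborel) \<le> ennreal (f (fst p) \<tau> * f (snd p) \<tau>) * indicator ({0..}\<times>{0..}) p * excess_mass \<tau>"
      using nn_integral_reflected_excess_le[OF \<tau>, of "fst p" "snd p"]
      by (cases "p \<in> {0..}\<times>{0..}") (auto simp: h_def)
  qed
  also have "\<dots> = ennreal ((norm1 \<tau>)^2) * excess_mass \<tau>"
    using nn_integral_product_eq_norm1_sq[OF \<tau>] by (subst nn_integral_multc) simp_all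
  finally show ?thesis .
qed

lemma nn_integral_excess_rate_le:
  assumes \<tau>: "0 \<le> \<tau>"
  shows "(\<integral>\<^sup>+x\<in>{0..}. ennreal (4 * b0^2 * (norm1 \<tau>)^2) * ennreal (excess x \<tau>) + ennreal (4 * b0^2) * excess_gain x \<tau> \<partial>lborel)
    \<le> ennreal (8 * b0^2 * (norm1 \<tau>)^2) * excess_mass \<tau>"
proof -
  have "(\<integral>\<^sup>+x\<in>{0..}. ennreal (4 * b0^2 * (norm1 \<tau>)^2) * ennreal (excess x \<tau>) + ennreal (4 * b0^2) * excess_gain x \<tau> \<partial>lborel)
      = (\<integral>\<^sup>+x. ennreal (4 * b0^2 * (norm1 \<tau>)^2) * (ennreal (excess x \<tau>) * indicator {0..} x)
          + ennreal (4 * b0^2) * (excess_gain x \<tau> * indicator {0..} x) \<partial>lborel)"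
    by (intro nn_integral_cong) (simp add: distrib_right mult.assoc)
  also have "\<dots> = ennreal (4 * b0^2 * (norm1 \<tau>)^2) * excess_mass \<tau>
      + ennreal (4 * b0^2) * (\<integral>\<^sup>+x\<in>{0..}. excess_gain x \<tau> \<partial>lborel)"
    unfolding excess_mass_def by (subst nn_integral_add) (simp_all add: nn_integral_cmult)
  also have "\<dots> \<le> ennreal (4 * b0^2 * (norm1 \<tau>)^2) * excess_mass \<tau>
      + ennreal (4 * b0^2) * (ennreal ((norm1 \<tau>)^2) * excess_mass \<tau>)"
    by (intro add_left_mono mult_left_mono excess_gain_mass_le[OF \<tau>]) simp
  also have "\<dots> = ennreal (8 * b0^2 * (norm1 \<tau>)^2) * excess_mass \<tau>"
  proof -
    have "ennreal (4 * b0^2) * (ennreal ((norm1 \<tau>)^2) * excess_mass \<tau>) = ennreal (4 * b0^2 * (norm1 \<tau>)^2) * excess_mass \<tau>"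
      by (simp add: ennreal_mult mult.assoc)
    moreover have "ennreal (4 * b0^2 * (norm1 \<tau>)^2) * excess_mass \<tau> + ennreal (4 * b0^2 * (norm1 \<tau>)^2) * excess_mass \<tau>
        = ennreal (8 * b0^2 * (norm1 \<tau>)^2) * excess_mass \<tau>"
      by (simp add: distrib_right[symmetric] ennreal_plus[symmetric])
    ultimately show ?thesis by simp
  qed
  finally show ?thesis .
qed

lemma AE_excess_le:
  assumes t: "0 \<le> t"
  shows "AE x in lborel. 0 \<le> x \<longrightarrow> ennreal (excess x t) \<le> (\<integral>\<^sup>+\<tau>\<in>{0..t}.
    ennreal (4 * b0^2 * (norm1 \<tau>)^2) * ennreal (excess x \<tau>) + ennreal (4 * b0^2) * excess_gain x \<tau> \<partial>lborel)"
  using AE_mild_equation initial_le AE_lborel_singleton[of 0]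
proof eventually_elim
  case (elim x)
  show ?case
  proof
    assume x: "0 \<le> x"
    have "0 < x"
      using elim(3) x by simp
    moreover have "f x 0 \<le> M0"
      using elim(2) x by blast
    moreover have "f x t = f x 0 + (LINT \<tau>:{0..t}|lborel. Qcoll ph f x \<tau>)"
      using elim(1) x t by blast
    ultimately show "ennreal (excess x t) \<le> (\<integral>\<^sup>+\<tau>\<in>{0..t}.
      ennreal (4 * b0^2 * (norm1 \<tau>)^2) * ennreal (excess x \<tau>) + ennreal (4 * b0^2) * excess_gain x \<tau> \<partial>lborel)"
      using t by (intro excess_le)
  qed
qed

lemma excess_mass_le:
  assumes t: "0 \<le> t"
  shows "excess_mass t \<le> (\<integral>\<^sup>+\<tau>\<in>{0..t}. ennreal (8 * b0^2 * (norm1 \<tau>)^2) * excess_mass \<tau> \<partial>lborel)"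
proof -
  define G where "G x \<tau> = (ennreal (4 * b0^2 * (norm1 \<tau>)^2) * ennreal (excess x \<tau>) + ennreal (4 * b0^2) * excess_gain x \<tau>)
    * indicator {0..t} \<tau> * indicator {0..} x" for x \<tau>
  have G_measurable: "case_prod G \<in> borel_measurable (lborel \<Otimes>\<^sub>M lborel)"
    unfolding G_def by measurable
  have "AE x in lborel. ennreal (excess x t) * indicator {0..} x \<le> (\<integral>\<^sup>+\<tau>. G x \<tau> \<partial>lborel)"
    using AE_excess_le[OF t]
  proof (rule eventually_mono)
    fix x
    assume le: "0 \<le> x \<longrightarrow> ennreal (excess x t) \<le> (\<integral>\<^sup>+\<tau>\<in>{0..t}.
      ennreal (4 * b0^2 * (norm1 \<tau>)^2) * ennreal (excess x \<tau>) + ennreal (4 * b0^2) * excess_gain x \<tau> \<partial>lborel)"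
    have "(\<integral>\<^sup>+\<tau>. G x \<tau> \<partial>lborel) = (\<integral>\<^sup>+\<tau>\<in>{0..t}.
      ennreal (4 * b0^2 * (norm1 \<tau>)^2) * ennreal (excess x \<tau>) + ennreal (4 * b0^2) * excess_gain x \<tau> \<partial>lborel)
      * indicator {0..} x"
      unfolding G_def by (rule nn_integral_multc) measurable
    then show "ennreal (excess x t) * indicator {0..} x \<le> (\<integral>\<^sup>+\<tau>. G x \<tau> \<partial>lborel)"
      using le by (simp add: indicator_def)
  qed
  then have "excess_mass t \<le> (\<integral>\<^sup>+x. \<integral>\<^sup>+\<tau>. G x \<tau> \<partial>lborel \<partial>lborel)"
    unfolding excess_mass_def by (rule nn_integral_mono_AE)
  also have "\<dots> = (\<integral>\<^sup>+\<tau>. \<integral>\<^sup>+x. G x \<tau> \<partial>lborel \<partial>lborel)"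
    by (rule lborel_pair.Fubini'[OF G_measurable, symmetric])
  also have "\<dots> \<le> (\<integral>\<^sup>+\<tau>\<in>{0..t}. ennreal (8 * b0^2 * (norm1 \<tau>)^2) * excess_mass \<tau> \<partial>lborel)"
  proof (intro nn_integral_mono)
    fix \<tau> :: real
    show "(\<integral>\<^sup>+x. G x \<tau> \<partial>lborel) \<le> ennreal (8 * b0^2 * (norm1 \<tau>)^2) * excess_mass \<tau> * indicator {0..t} \<tau>"
      unfolding G_def using nn_integral_excess_rate_le[of \<tau>]
      by (cases "\<tau> \<in> {0..t}") simp_all
  qed
  finally show ?thesis .
qed

lemma excess_mass_le_norm1:
  assumes \<tau>: "0 \<le> \<tau>"
  shows "excess_mass \<tau> \<le> ennreal (norm1 \<tau>)"
proof -
  have "excess_mass \<tau> \<le> (\<integral>\<^sup>+x\<in>{0..}. ennreal (f x \<tau>) \<partial>lborel)"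
    unfolding excess_mass_def
    using f_nonneg \<tau> envelope_nonneg[OF \<tau>]
    by (intro nn_integral_mono) (auto simp: excess_def indicator_def intro!: ennreal_leI)
  then show ?thesis
    using nn_integral_eq_norm1[OF \<tau>] by simp
qed

lemma excess_mass_eq_0:
  assumes T: "0 \<le> T"
  shows "excess_mass T = 0"
proof -
  obtain s where s: "s \<in> {0..T}" and max: "\<forall>\<tau>\<in>{0..T}. norm1 \<tau> \<le> norm1 s"
    using continuous_attains_sup[of "{0..T}" norm1] continuous_on_subset[OF continuous_on_norm1, of "{0..T}"] T
    by auto
  have bounded: "\<forall>t\<in>{0..T}. excess_mass t \<le> ennreal (norm1 s)"
  proof
    fix t
    assume "t \<in> {0..T}"
    then show "excess_mass t \<le> ennreal (norm1 s)"
      using excess_mass_le_norm1[of t] max by (fastforce intro: order.trans ennreal_leI)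
  qed
  have "\<forall>t\<in>{0..T}. excess_mass t \<le> (\<integral>\<^sup>+\<tau>\<in>{0..t}. ennreal (8 * b0^2 * (norm1 s)^2) * excess_mass \<tau> \<partial>lborel)"
  proof
    fix t
    assume t: "t \<in> {0..T}"
    have "excess_mass t \<le> (\<integral>\<^sup>+\<tau>\<in>{0..t}. ennreal (8 * b0^2 * (norm1 \<tau>)^2) * excess_mass \<tau> \<partial>lborel)"
      using excess_mass_le t by simp
    also have "\<dots> \<le> (\<integral>\<^sup>+\<tau>\<in>{0..t}. ennreal (8 * b0^2 * (norm1 s)^2) * excess_mass \<tau> \<partial>lborel)"
    proof (intro nn_integral_mono)
      fix \<tau> :: real
      have "\<tau> \<in> {0..t} \<Longrightarrow> 8 * b0^2 * (norm1 \<tau>)^2 \<le> 8 * b0^2 * (norm1 s)^2"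
        using max t norm1_nonneg by (intro mult_left_mono power_mono) auto
      then show "ennreal (8 * b0^2 * (norm1 \<tau>)^2) * excess_mass \<tau> * indicator {0..t} \<tau>
          \<le> ennreal (8 * b0^2 * (norm1 s)^2) * excess_mass \<tau> * indicator {0..t} \<tau>"
        by (cases "\<tau> \<in> {0..t}") (auto intro!: mult_right_mono ennreal_leI)
    qed
    finally show "excess_mass t \<le> (\<integral>\<^sup>+\<tau>\<in>{0..t}. ennreal (8 * b0^2 * (norm1 s)^2) * excess_mass \<tau> \<partial>lborel)" .
  qed
  then show ?thesis
    using T by (intro gronwall_nn_integral_zero[OF bounded norm1_nonneg]) auto
qed

lemma AE_le_envelope:
  assumes t: "0 \<le> t"
  shows "AE x in lborel. 0 \<le> x \<longrightarrow> f x t \<le> envelope t"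
proof -
  have "AE x in lborel. ennreal (excess x t) * indicator {0..} x = 0"
    using excess_mass_eq_0[OF t] unfolding excess_mass_def
    by (subst (asm) nn_integral_0_iff_AE) measurable
  then show ?thesis
    by eventually_elim (auto simp: excess_def max_def split: if_splits)
qed

end

theorem proposition4p3:
  fixes ph :: "real \<Rightarrow> real" and b0 \<eta> :: real
    and f0 :: "real \<Rightarrow> real" and f :: "real \<Rightarrow> real \<Rightarrow> real"
  assumes kernel: "kernel_assumption ph b0 \<eta>"
    and eta: "\<eta> \<ge> 3/2"
    and f0_nonneg: "\<forall>x\<ge>0. f0 x \<ge> 0"
    and f0_L1: "set_integrable lborel {0..} f0"
    and f0_mass_energy: "(\<integral>\<^sup>+ x\<in>{0..}. ennreal ((1 + x) * f0 x * sqrt x) \<partial>lborel) < \<infinity>"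
    and f_cont: "C_L1 f"
    and f_mild: "mild_solution ph f"
    and f_cons: "conservative f"
    and f_init: "\<forall>x\<ge>0. f x 0 = f0 x"
    and f_unique: "\<forall>g. C_L1 g \<and> mild_solution ph g \<and> conservative g \<and> (\<forall>x\<ge>0. g x 0 = f0 x)
                      \<longrightarrow> (\<forall>t\<ge>0. AE x in lborel. x \<ge> 0 \<longrightarrow> g x t = f x t)"
    and f0_Linf: "Linfnorm f0 < \<infinity>"
  shows "\<forall>t\<ge>0. Linfnorm (\<lambda>x. f x t) < \<infinity> \<and>
           Linfnorm (\<lambda>x. f x t) \<le>
             (1 + Linfnorm f0) * ereal (exp (8 * b0^2 * (LINT \<tau>:{0..t}|lborel. (L1norm (\<lambda>x. f x \<tau>))^2)))"
proof (intro allI impI)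
  fix t :: real
  assume t: "t \<ge> 0"
  obtain M0 where M0: "Linfnorm f0 = ereal M0" and "0 \<le> M0"
    using f0_Linf Linfnorm_nonneg[of f0] by (cases "Linfnorm f0") auto
  have "AE x in lborel. 0 \<le> x \<longrightarrow> f x 0 \<le> M0"
    using AE_abs_le_Linfnorm[of f0] by eventually_elim (use f_init M0 in auto)
  then interpret bounded_mild_solution ph f b0 M0
    using kernel_assumption_bounded[OF kernel] f_mild f_cont \<open>0 \<le> M0\<close> by unfold_locales auto
  have "Linfnorm (\<lambda>x. f x t) \<le> ereal (envelope t)"
    using AE_le_envelope[OF t] by (intro Linfnorm_le) (measurable, auto simp: f_nonneg t elim!: eventually_mono)
  moreover have "ereal (envelope t) \<le>
      (1 + Linfnorm f0) * ereal (exp (8 * b0^2 * (LINT \<tau>:{0..t}|lborel. (L1norm (\<lambda>x. f x \<tau>))^2)))"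
    unfolding envelope_def norm1_def M0 by (simp add: add.commute)
  ultimately show "Linfnorm (\<lambda>x. f x t) < \<infinity> \<and> Linfnorm (\<lambda>x. f x t) \<le>
      (1 + Linfnorm f0) * ereal (exp (8 * b0^2 * (LINT \<tau>:{0..t}|lborel. (L1norm (\<lambda>x. f x \<tau>))^2)))"
    by (auto intro: order.trans le_less_trans)
qed

end
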